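(* Suppose Assumptions (A1), (A2), (A3) hold, and either (SC) or (LIN) holds. Then for each $i\in\{1,\dots,k\}$ the Lagrange multiplier $x\mapsto\lambda_i(x)$ is continuous on $\mathcal{X}$, and there is a constant bounding $\lambda_i(x)$ for all $i$ and all $x\in\mathcal{X}$.
   Context: Let $f,g,h_1,\dots,h_k:\mathbb{R}^n\times\mathbb{R}^m\to\mathbb{R}$ and $\mathcal{X}\subseteq\mathbb{R}^n$. For $x\in\mathcal{X}$ let $\mathcal{Y}(x)=\{y: h_i(x,y)\le 0,\ i=1,\dots,k\}$ and $y^*(x)=\arg\min_{y\in\mathcal{Y}(x)} g(x,y)$. For $y\in y^*(x)$, $\lambda_i(x,y)\ge0$ denotes the optimal KKT multiplier of the $i$-th constraint, i.e. $\nabla_y g(x,y)+\sum_i\lambda_i(x,y)\nabla_y h_i(x,y)=0$ with complementary slackness. Under (SC), $y^*(x)$ is a singleton; under (LIN), $\lambda_i(x,y)$ does not depend on the choice of $y\in y^*(x)$; in both cases it is written $\lambda_i(x)$. Assumptions: (A1) $f$ once and $g,h_i$ twice continuously differentiable; (A2) $\mathcal{X}$ convex and compact and for every $x\in\mathcal{X}$ there is $y$ with $h_i(x,y)<0$ for all $i$; (A3) (LICQ) for every $x\in\mathcal{X}$ and $y\in y^*(x)$, $\{\nabla_y h_i(x,y): h_i(x,y)=0\}$ is linearly independent; (SC) for every $x\in\mathcal{X}$, $g(x,\cdot)$ is $\mu_g$-strongly convex and each $h_i(x,\cdot)$ convex; (LIN) for every $x\in\mathcal{X}$, $g(x,\cdot)$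 and all $h_i(x,\cdot)$ are linear (affine) in $y$ and $\mathcal{Y}(x)$ is compact. *)

theory Defs
  imports "HOL-Analysis.Analysis"
begin

definition C1_fun :: "('c::real_normed_vector \<Rightarrow> 'd::real_normed_vector) \<Rightarrow> bool" where
  "C1_fun F \<longleftrightarrow> (\<exists>F'. (\<forall>z. (F has_derivative blinfun_apply (F' z)) (at z)) \<and> continuous_on UNIV F')"

definition C2_fun :: "('c::real_normed_vector \<Rightarrow> 'd::real_normed_vector) \<Rightarrow> bool" where
  "C2_fun F \<longleftrightarrow> (\<exists>F'. (\<forall>z. (F has_derivative blinfun_apply (F' z)) (at z)) \<and> C1_fun F')"

definition strongly_convex_on :: "'b::real_normed_vector set \<Rightarrow> real \<Rightarrow> ('b \<Rightarrow> real) \<Rightarrow> bool" where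
  "strongly_convex_on S \<mu> f \<longleftrightarrow> convex_on S (\<lambda>y. f y - \<mu> / 2 * (norm y)\<^sup>2)"

definition affine_fun :: "('b::real_vector \<Rightarrow> real) \<Rightarrow> bool" where
  "affine_fun f \<longleftrightarrow> (\<exists>L c. linear L \<and> (\<forall>y. f y = L y + c))"

definition feas :: "nat \<Rightarrow> (nat \<Rightarrow> 'a \<Rightarrow> 'b \<Rightarrow> real) \<Rightarrow> 'a \<Rightarrow> 'b set" where
  "feas k h x = {y. \<forall>i\<in>{1..k}. h i x y \<le> 0}"

definition ystar :: "('a \<Rightarrow> 'b \<Rightarrow> real) \<Rightarrow> nat \<Rightarrow> (nat \<Rightarrow> 'a \<Rightarrow> 'b \<Rightarrow> real) \<Rightarrow> 'a \<Rightarrow> 'b set" where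
  "ystar g k h x = {y \<in> feas k h x. \<forall>y'\<in>feas k h x. g x y \<le> g x y'}"

definition Dy :: "('a \<Rightarrow> 'b::real_normed_vector \<Rightarrow> real) \<Rightarrow> 'a \<Rightarrow> 'b \<Rightarrow> 'b \<Rightarrow> real" where
  "Dy F x y = frechet_derivative (F x) (at y)"

definition is_KKT_mult :: "('a \<Rightarrow> 'b::real_normed_vector \<Rightarrow> real) \<Rightarrow> nat \<Rightarrow> (nat \<Rightarrow> 'a \<Rightarrow> 'b \<Rightarrow> real)
    \<Rightarrow> 'a \<Rightarrow> 'b \<Rightarrow> (nat \<Rightarrow> real) \<Rightarrow> bool" where
  "is_KKT_mult g k h x y lam \<longleftrightarrow>
     (\<forall>i\<in>{1..k}. lam i \<ge> 0) \<and>
     (\<forall>v. Dy g x y v + (\<Sum>i\<in>{1..k}. lam i * Dy (h i) x y v) = 0) \<and>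
     (\<forall>i\<in>{1..k}. lam i * h i x y = 0)"

definition LICQ_at :: "nat \<Rightarrow> (nat \<Rightarrow> 'a \<Rightarrow> 'b::real_normed_vector \<Rightarrow> real) \<Rightarrow> 'a \<Rightarrow> 'b \<Rightarrow> bool" where
  "LICQ_at k h x y \<longleftrightarrow>
     (\<forall>c. (\<forall>v. (\<Sum>i\<in>{i\<in>{1..k}. h i x y = 0}. c i * Dy (h i) x y v) = 0)
          \<longrightarrow> (\<forall>i\<in>{i\<in>{1..k}. h i x y = 0}. c i = 0))"

end

theory Submission
  imports Defs
begin

text \<open>
  At a lower-level minimiser, Gordan's alternative yields Fritz John multipliers (otherwise a
  strictly feasible descent direction would exist), and LICQ makes the weight of the objective
  positive, giving KKT multipliers; LICQ also makes them unique. Under (SC) the minimiser is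
  unique, and under (LIN) a multiplier at one minimiser serves at all of them, so \<open>\<lambda>(x)\<close> is
  well defined.

  For continuity let \<open>x\<^sub>n \<rightarrow> x\<close> and pick minimisers \<open>y\<^sub>n\<close>. A subsequence converges: under (SC)
  strong convexity keeps \<open>y\<^sub>n\<close> within bounded distance of a Slater point, and under (LIN) an
  escaping direction would be a recession direction of the compact set \<open>Y(x)\<close>. By Slater's
  condition the limit minimises at \<open>x\<close>. The normalised multipliers
  \<open>(1, \<lambda>(x\<^sub>n)) / (1 + \<Sum>\<^sub>i \<lambda>\<^sub>i(x\<^sub>n))\<close> are Fritz John multipliers in a compact set, so along a
  further subsequence they converge to Fritz John multipliers at the limit; by LICQ their
  objective weight is positive and by uniqueness the rescaled limit is \<open>\<lambda>(x)\<close>. Every subsequence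
  of \<open>\<lambda>(x\<^sub>n)\<close> thus has a further subsequence tending to \<open>\<lambda>(x)\<close>. Boundedness follows from
  continuity on the compact \<open>X\<close>.
\<close>

section \<open>Gordan's alternative\<close>

lemma linear_eq_inner_gradient:
  fixes L :: "'a::euclidean_space \<Rightarrow> real"
  assumes "linear L"
  shows "L v = (\<Sum>b\<in>Basis. L b *\<^sub>R b) \<bullet> v"
proof -
  have "L v = L (\<Sum>b\<in>Basis. (v \<bullet> b) *\<^sub>R b)" by (simp add: euclidean_representation)
  also have "\<dots> = (\<Sum>b\<in>Basis. (v \<bullet> b) * L b)"
    using assms by (simp add: linear_sum linear_scale)
  also have "\<dots> = (\<Sum>b\<in>Basis. L b *\<^sub>R b) \<bullet> v"
    by (simp add: inner_sum_right inner_commute mult.commute)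
  finally show ?thesis .
qed

lemma convex_hull_finite_image:
  fixes u :: "'i \<Rightarrow> 'a::real_vector"
  assumes "finite I" "z \<in> convex hull (u ` I)"
  obtains w where "\<And>i. i \<in> I \<Longrightarrow> 0 \<le> w i" "sum w I = 1" "(\<Sum>i\<in>I. w i *\<^sub>R u i) = z"
proof -
  obtain c where c: "\<forall>p\<in>u ` I. 0 \<le> c p" "sum c (u ` I) = 1" "(\<Sum>p\<in>u ` I. c p *\<^sub>R p) = z"
    using assms by (auto simp: convex_hull_finite)
  define m where "m p = card {j \<in> I. u j = p}" for p
  have m_pos: "m p > 0" if "p \<in> u ` I" for p
    using that assms(1) unfolding m_def by (auto simp: card_gt_0_iff)
  define w where "w i = c (u i) / m (u i)" for i
  show thesis
  proof
    show "0 \<le> w i" if "i \<in> I" for i using c(1) that by (simp add: w_def m_def)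
    have "sum w I = (\<Sum>p\<in>u ` I. \<Sum>j\<in>{j \<in> I. u j = p}. w j)"
      using assms(1) by (rule sum.image_gen)
    also have "\<dots> = (\<Sum>p\<in>u ` I. c p)"
    proof (rule sum.cong)
      fix p assume p: "p \<in> u ` I"
      have "(\<Sum>j\<in>{j \<in> I. u j = p}. w j) = (\<Sum>j\<in>{j \<in> I. u j = p}. c p / m p)"
        by (rule sum.cong) (auto simp: w_def)
      also have "\<dots> = c p" using m_pos[OF p] by (simp add: m_def)
      finally show "(\<Sum>j\<in>{j \<in> I. u j = p}. w j) = c p" .
    qed simp
    finally show "sum w I = 1" using c(2) by simp
    have "(\<Sum>i\<in>I. w i *\<^sub>R u i) = (\<Sum>p\<in>u ` I. \<Sum>j\<in>{j \<in> I. u j = p}. w j *\<^sub>R u j)"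
      using assms(1) by (rule sum.image_gen)
    also have "\<dots> = (\<Sum>p\<in>u ` I. c p *\<^sub>R p)"
    proof (rule sum.cong)
      fix p assume p: "p \<in> u ` I"
      have "(\<Sum>j\<in>{j \<in> I. u j = p}. w j *\<^sub>R u j) = (\<Sum>j\<in>{j \<in> I. u j = p}. (c p / m p) *\<^sub>R p)"
        by (rule sum.cong) (auto simp: w_def)
      also have "\<dots> = c p *\<^sub>R p" using m_pos[OF p] by (simp add: m_def scaleR_sum_left[symmetric])
      finally show "(\<Sum>j\<in>{j \<in> I. u j = p}. w j *\<^sub>R u j) = c p *\<^sub>R p" .
    qed simp
    finally show "(\<Sum>i\<in>I. w i *\<^sub>R u i) = z" using c(3) by simp
  qed
qed

lemma gordan_alternative:
  fixes L :: "'i \<Rightarrow> 'a::euclidean_space \<Rightarrow> real"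
  assumes fin: "finite I" and lin: "\<And>i. i \<in> I \<Longrightarrow> linear (L i)"
  obtains w where "\<And>i. i \<in> I \<Longrightarrow> 0 \<le> w i" "sum w I = 1" "\<And>v. (\<Sum>i\<in>I. w i * L i v) = 0"
    | d where "\<And>i. i \<in> I \<Longrightarrow> L i d < 0"
proof -
  define u where "u i = (\<Sum>b\<in>Basis. L i b *\<^sub>R b)" for i
  have L_eq: "L i v = u i \<bullet> v" if "i \<in> I" for i v
    unfolding u_def using linear_eq_inner_gradient[OF lin[OF that]] .
  show thesis
  proof (cases "0 \<in> convex hull (u ` I)")
    case True
    then obtain w where w: "\<And>i. i \<in> I \<Longrightarrow> 0 \<le> w i" "sum w I = 1" "(\<Sum>i\<in>I. w i *\<^sub>R u i) = 0"
      using convex_hull_finite_image[OF fin] by metis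
    have "(\<Sum>i\<in>I. w i * L i v) = (\<Sum>i\<in>I. w i *\<^sub>R u i) \<bullet> v" for v
      by (simp add: L_eq inner_sum_left)
    then show thesis by (intro that(1)[of w]) (use w in auto)
  next
    case False
    have "compact (convex hull (u ` I))"
      using fin by (intro compact_convex_hull finite_imp_compact) simp
    then obtain a b where ab: "0 < b" "\<forall>z\<in>convex hull (u ` I). a \<bullet> z > b"
      using separating_hyperplane_closed_0[OF convex_convex_hull compact_imp_closed False] by blast
    have "L i (- a) < 0" if "i \<in> I" for i
    proof -
      have "a \<bullet> u i > b" using ab(2) hull_inc[of "u i" "u ` I"] that by blast
      then show ?thesis using ab(1) that by (simp add: L_eq inner_commute)
    qed
    with that(2) show thesis by blast
  qed
qed

section \<open>Derivatives along rays and strong convexity\<close>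

lemma has_derivative_along_ray:
  fixes F :: "'a::real_normed_vector \<Rightarrow> real"
  assumes "(F has_derivative F') (at y)"
  shows "((\<lambda>t. F (y + t *\<^sub>R d)) has_real_derivative F' d) (at 0)"
proof -
  have ray: "((\<lambda>t. y + t *\<^sub>R d) has_derivative (\<lambda>t. t *\<^sub>R d)) (at 0)"
    by (auto intro!: derivative_eq_intros)
  have "(F has_derivative F') (at (y + 0 *\<^sub>R d))" using assms by simp
  from diff_chain_at[OF ray this]
  have "((\<lambda>t. F (y + t *\<^sub>R d)) has_derivative (\<lambda>t. F' (t *\<^sub>R d))) (at 0)"
    by (simp add: o_def)
  moreover have "(\<lambda>t. F' (t *\<^sub>R d)) = (*) (F' d)"
    using has_derivative_linear[OF assms] by (auto simp: fun_eq_iff linear_scale)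
  ultimately show ?thesis by (simp add: has_field_derivative_def)
qed

lemma eventually_less_along_descent_direction:
  fixes F :: "'a::real_normed_vector \<Rightarrow> real"
  assumes "(F has_derivative F') (at y)" and "F' d < 0"
  shows "\<forall>\<^sub>F t in at_right 0. F (y + t *\<^sub>R d) < F y"
proof -
  obtain e where "e > 0" "\<forall>t>0. t < e \<longrightarrow> F (y + (0 + t) *\<^sub>R d) < F (y + 0 *\<^sub>R d)"
    using DERIV_neg_dec_right[OF has_derivative_along_ray[OF assms(1)] assms(2)] by blast
  then show ?thesis
    unfolding eventually_at_right_field by (intro exI[of _ e]) auto
qed

lemma eventually_neg_along_ray:
  fixes F :: "'a::real_normed_vector \<Rightarrow> real"
  assumes "isCont F y" and "F y < 0"
  shows "\<forall>\<^sub>F t in at_right 0. F (y + t *\<^sub>R d) < 0"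
proof -
  have "((\<lambda>t. y + t *\<^sub>R d) \<longlongrightarrow> y + 0 *\<^sub>R d) (at_right 0)"
    by (intro tendsto_intros)
  then have "((\<lambda>t. F (y + t *\<^sub>R d)) \<longlongrightarrow> F y) (at_right 0)"
    using isCont_tendsto_compose[OF assms(1)] by simp
  from order_tendstoD(2)[OF this assms(2)] show ?thesis .
qed

lemma convex_on_above_tangent:
  fixes F :: "'a::real_normed_vector \<Rightarrow> real"
  assumes cvx: "convex_on UNIV F" and der: "(F has_derivative F') (at y)"
  shows "F y + F' (z - y) \<le> F z"
proof -
  define \<phi> where "\<phi> t = F (y + t *\<^sub>R (z - y))" for t
  have "convex_on UNIV \<phi>"
  proof (rule convex_onI)
    fix t a b :: real assume "0 < t" "t < 1"
    have "y + ((1 - t) *\<^sub>R a + t *\<^sub>R b) *\<^sub>R (z - y)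
        = (1 - t) *\<^sub>R (y + a *\<^sub>R (z - y)) + t *\<^sub>R (y + b *\<^sub>R (z - y))"
      by (simp add: algebra_simps)
    then show "\<phi> ((1 - t) *\<^sub>R a + t *\<^sub>R b) \<le> (1 - t) * \<phi> a + t * \<phi> b"
      unfolding \<phi>_def using convex_onD[OF cvx, of t] \<open>0 < t\<close> \<open>t < 1\<close> by auto
  qed simp
  moreover have "(\<phi> has_real_derivative F' (z - y)) (at 0)"
    unfolding \<phi>_def by (rule has_derivative_along_ray[OF der])
  ultimately have "\<phi> 1 - \<phi> 0 \<ge> F' (z - y) * (1 - 0)"
    by (intro convex_on_imp_above_tangent) auto
  then show ?thesis unfolding \<phi>_def by simp
qed

lemma strongly_convex_on_above_tangent:
  fixes \<phi> :: "'a::real_inner \<Rightarrow> real"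
  assumes sc: "strongly_convex_on UNIV \<mu> \<phi>" and der: "(\<phi> has_derivative \<Phi>) (at y)"
  shows "\<phi> y + \<Phi> (z - y) + \<mu> / 2 * (norm (z - y))\<^sup>2 \<le> \<phi> z"
proof -
  define G where "G u = \<phi> u - \<mu> / 2 * (norm u)\<^sup>2" for u
  have "convex_on UNIV G" using sc unfolding strongly_convex_on_def G_def .
  moreover have "(G has_derivative (\<lambda>v. \<Phi> v - \<mu> / 2 * (2 * (y \<bullet> v)))) (at y)"
  proof -
    have "((\<lambda>u. u \<bullet> u) has_derivative (\<lambda>v. y \<bullet> v + v \<bullet> y)) (at y)"
      by (auto intro!: derivative_eq_intros)
    then have "((\<lambda>u. (norm u)\<^sup>2) has_derivative (\<lambda>v. 2 * (y \<bullet> v))) (at y)"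
      by (simp add: power2_norm_eq_inner inner_commute)
    then show ?thesis unfolding G_def by (intro derivative_intros der)
  qed
  ultimately have "G y + (\<Phi> (z - y) - \<mu> / 2 * (2 * (y \<bullet> (z - y)))) \<le> G z"
    by (rule convex_on_above_tangent)
  moreover have "(norm z)\<^sup>2 = (norm y)\<^sup>2 + 2 * (y \<bullet> (z - y)) + (norm (z - y))\<^sup>2"
    by (simp add: power2_norm_eq_inner inner_diff inner_commute algebra_simps)
  ultimately show ?thesis unfolding G_def by (simp add: algebra_simps)
qed

lemma strongly_convex_on_sublevel_dist_le:
  fixes \<phi> :: "'a::real_inner \<Rightarrow> real"
  assumes sc: "strongly_convex_on UNIV \<mu> \<phi>" and "0 < \<mu>" "0 \<le> M"
    and der: "(\<phi> has_derivative \<Phi>) (at y0)" and bound: "\<And>v. \<bar>\<Phi> v\<bar> \<le> M * norm v"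
    and le: "\<phi> y \<le> \<phi> y0"
  shows "norm (y - y0) \<le> 2 * M / \<mu>"
proof -
  define d where "d = norm (y - y0)"
  have "\<mu> / 2 * d\<^sup>2 \<le> - \<Phi> (y - y0)"
    using strongly_convex_on_above_tangent[OF sc der, of y] le unfolding d_def by linarith
  also have "\<dots> \<le> M * d" using bound[of "y - y0"] unfolding d_def by linarith
  finally have "\<mu> / 2 * d * d \<le> M * d" by (simp add: power2_eq_square)
  moreover have "d \<ge> 0" unfolding d_def by simp
  ultimately have "\<mu> / 2 * d \<le> M" using \<open>0 \<le> M\<close>
    by (cases "d = 0") (auto simp: mult_le_cancel_right)
  then show ?thesis using \<open>0 < \<mu>\<close> unfolding d_def by (simp add: field_simps)
qed

section \<open>Subsequences and escaping directions\<close>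

lemma LIMSEQ_if_subseqs_have_LIMSEQ_subseq:
  fixes a :: "nat \<Rightarrow> 'a::metric_space"
  assumes "\<And>r :: nat \<Rightarrow> nat. strict_mono r \<Longrightarrow> \<exists>r'. strict_mono r' \<and> (\<lambda>n. a (r (r' n))) \<longlonglongrightarrow> L"
  shows "a \<longlonglongrightarrow> L"
proof (rule ccontr)
  assume "\<not> a \<longlonglongrightarrow> L"
  then obtain e where "e > 0" and not_ev: "\<not> (\<forall>\<^sub>F n in sequentially. dist (a n) L < e)"
    unfolding tendsto_iff by auto
  define S where "S = {n. e \<le> dist (a n) L}"
  have "infinite S"
    using not_ev unfolding S_def infinite_nat_iff_unbounded_le eventually_sequentially by (auto simp: not_less)
  then have r: "strict_mono (enumerate S)" "enumerate S n \<in> S" for n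
    by (auto simp: strict_mono_def enumerate_mono enumerate_in_set)
  obtain r' where "strict_mono r'" "(\<lambda>n. a (enumerate S (r' n))) \<longlonglongrightarrow> L"
    using assms[OF r(1)] by blast
  from tendstoD[OF this(2) \<open>e > 0\<close>] obtain n where "dist (a (enumerate S (r' n))) L < e"
    using eventually_happens' sequentially_bot by blast
  with r(2)[of "r' n"] show False by (simp add: S_def)
qed

lemma bounded_family_convergent_subseq:
  fixes a :: "nat \<Rightarrow> 'i \<Rightarrow> 'a::heine_borel"
  assumes "finite I" and "\<And>i. i \<in> I \<Longrightarrow> bounded (range (\<lambda>n. a n i))"
  shows "\<exists>r l. strict_mono r \<and> (\<forall>i\<in>I. (\<lambda>n. a (r n) i) \<longlonglongrightarrow> l i)"
  using assms
proof (induction I rule: finite_induct)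
  case empty
  show ?case using strict_mono_id by blast
next
  case (insert j I)
  then obtain r l where r: "strict_mono r" "\<forall>i\<in>I. (\<lambda>n. a (r n) i) \<longlonglongrightarrow> l i" by auto
  have "bounded (range (\<lambda>n. a (r n) j))"
    using insert.prems[of j] by (rule bounded_subset) auto
  then obtain lj r' where r': "strict_mono r'" "((\<lambda>n. a (r n) j) \<circ> r') \<longlonglongrightarrow> lj"
    using bounded_imp_convergent_subsequence by blast
  have "(\<lambda>n. a (r (r' n)) i) \<longlonglongrightarrow> (l(j := lj)) i" if "i \<in> insert j I" for i
  proof (cases "i = j")
    case True
    with r'(2) show ?thesis by (simp add: o_def)
  next
    case False
    with that LIMSEQ_subseq_LIMSEQ[OF r(2)[rule_format] r'(1)] show ?thesis by (simp add: o_def)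
  qed
  moreover have "strict_mono (r \<circ> r')" using r(1) r'(1) by (rule strict_mono_o)
  ultimately show ?case by (intro exI[of _ "r \<circ> r'"] exI[of _ "l(j := lj)"]) (simp add: o_def)
qed

lemma convergent_subseq_or_escaping_direction:
  fixes y :: "nat \<Rightarrow> 'a::euclidean_space"
  obtains r y0 where "strict_mono r" "(\<lambda>n. y (r n)) \<longlonglongrightarrow> y0"
  | r d where "strict_mono r" "norm d = 1" "filterlim (\<lambda>n. norm (y (r n))) at_top sequentially"
      "(\<lambda>n. y (r n) /\<^sub>R norm (y (r n))) \<longlonglongrightarrow> d"
proof -
  \<comment> \<open>\<open>(s, s y)\<close> stays bounded, and \<open>s \<rightarrow> 0\<close> exactly when \<open>norm y\<close> escapes to infinity\<close>
  define s where "s n = 1 / (1 + norm (y n))" for n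
  have pos: "0 < 1 + norm (y n)" for n
    using norm_ge_zero[of "y n"] by linarith
  have s: "0 < s n" "s n \<le> 1" "norm (s n *\<^sub>R y n) = 1 - s n" for n
    unfolding s_def using pos[of n] by (simp_all add: field_simps)
  have "bounded (range (\<lambda>n. (s n, s n *\<^sub>R y n)))"
  proof -
    have "norm (s n, s n *\<^sub>R y n) \<le> 2" for n
      using norm_Pair_le[of "s n" "s n *\<^sub>R y n"] s[of n] by simp
    then show ?thesis unfolding bounded_iff by blast
  qed
  then obtain r p where r: "strict_mono r" "((\<lambda>n. (s n, s n *\<^sub>R y n)) \<circ> r) \<longlonglongrightarrow> p"
    using bounded_imp_convergent_subsequence by blast
  define s0 z0 where "s0 = fst p" and "z0 = snd p"
  have sr: "(\<lambda>n. s (r n)) \<longlonglongrightarrow> s0" and zr: "(\<lambda>n. s (r n) *\<^sub>R y (r n)) \<longlonglongrightarrow> z0"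
    using tendsto_fst[OF r(2)] tendsto_snd[OF r(2)] by (simp_all add: s0_def z0_def o_def)
  have "0 \<le> s0" using s(1) by (intro tendsto_lowerbound[OF sr] always_eventually) (auto intro: less_imp_le)
  show thesis
  proof (cases "s0 = 0")
    case False
    then have "(\<lambda>n. (1 / s (r n)) *\<^sub>R (s (r n) *\<^sub>R y (r n))) \<longlonglongrightarrow> (1 / s0) *\<^sub>R z0"
      by (intro tendsto_intros sr zr)
    moreover have "(1 / s (r n)) *\<^sub>R (s (r n) *\<^sub>R y (r n)) = y (r n)" for n
      using s(1)[of "r n"] by simp
    ultimately show thesis using that(1)[OF r(1)] by simp
  next
    case True
    have "norm z0 = 1 - s0"
      using tendsto_norm[OF zr] tendsto_diff[OF tendsto_const sr, of 1] s(3) by (simp add: LIMSEQ_unique)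
    with True have "norm z0 = 1" by simp
    have "filterlim (\<lambda>n. inverse (s (r n))) at_top sequentially"
      using True s(1) sr by (intro filterlim_inverse_at_top) auto
    then have "filterlim (\<lambda>n. -1 + inverse (s (r n))) at_top sequentially"
      by (rule filterlim_tendsto_add_at_top[OF tendsto_const])
    moreover have "norm (y n) = -1 + inverse (s n)" for n by (simp add: s_def)
    ultimately have escape: "filterlim (\<lambda>n. norm (y (r n))) at_top sequentially" by simp
    have dir: "(s n *\<^sub>R y n) /\<^sub>R (1 - s n) = y n /\<^sub>R norm (y n)" for n
      using s(3)[of n] by (cases "y n = 0") (auto simp: s_def field_simps)
    have "(\<lambda>n. y (r n) /\<^sub>R norm (y (r n))) \<longlonglongrightarrow> z0 /\<^sub>R (1 - s0)"
      unfolding dir[symmetric] using True by (intro tendsto_intros sr zr) simp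
    moreover have "z0 /\<^sub>R (1 - s0) = z0" using True by simp
    ultimately show thesis using that(2)[OF r(1) \<open>norm z0 = 1\<close> escape] by simp
  qed
qed

lemma bounded_contains_no_ray:
  fixes y d :: "'a::real_normed_vector"
  assumes "bounded S" and "d \<noteq> 0" and ray: "\<And>t. 0 \<le> t \<Longrightarrow> y + t *\<^sub>R d \<in> S"
  shows False
proof -
  obtain B where B: "\<And>z. z \<in> S \<Longrightarrow> norm z \<le> B" using assms(1) unfolding bounded_iff by blast
  have "norm y \<le> B" using B ray[of 0] by simp
  define t where "t = (B + norm y + 1) / norm d"
  have "0 \<le> B + norm y + 1" using \<open>norm y \<le> B\<close> norm_ge_zero[of y] by linarith
  then have "0 \<le> t" unfolding t_def by simp
  have "B + norm y + 1 = norm (t *\<^sub>R d)"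
    using \<open>0 \<le> B + norm y + 1\<close> assms(2) unfolding t_def by simp
  also have "\<dots> \<le> norm (y + t *\<^sub>R d) + norm y" using norm_triangle_ineq4[of "y + t *\<^sub>R d" y] by simp
  also have "\<dots> \<le> B + norm y" using B[OF ray[OF \<open>0 \<le> t\<close>]] by simp
  finally show False by simp
qed

section \<open>Partial derivatives of \<open>C\<^sup>1\<close> functions\<close>

lemma C2_fun_imp_C1_fun:
  assumes "C2_fun F"
  shows "C1_fun F"
proof -
  obtain F' where F': "\<forall>z. (F has_derivative blinfun_apply (F' z)) (at z)" and "C1_fun F'"
    using assms unfolding C2_fun_def by blast
  then obtain F'' where "\<forall>z. (F' has_derivative blinfun_apply (F'' z)) (at z)"
    unfolding C1_fun_def by blast
  then have "continuous_on UNIV F'"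
    by (intro continuous_at_imp_continuous_on ballI has_derivative_continuous) blast
  with F' show ?thesis unfolding C1_fun_def by blast
qed

lemma partial_has_derivative_Dy:
  fixes F :: "'a::real_normed_vector \<Rightarrow> 'b::real_normed_vector \<Rightarrow> real"
  assumes "((\<lambda>(x, y). F x y) has_derivative blinfun_apply F') (at (x, y))"
  shows "(F x has_derivative Dy F x y) (at y)" and "Dy F x y v = F' (0, v)"
proof -
  have "((\<lambda>v. (x, v)) has_derivative (\<lambda>v. (0, v))) (at y)"
    by (auto intro!: derivative_eq_intros)
  from diff_chain_at[OF this assms]
  have der: "(F x has_derivative (\<lambda>v. F' (0, v))) (at y)" by (simp add: o_def)
  then have "Dy F x y = (\<lambda>v. F' (0, v))" unfolding Dy_def by (rule frechet_derivative_at[symmetric])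
  with der show "(F x has_derivative Dy F x y) (at y)" "Dy F x y v = F' (0, v)" by simp_all
qed

lemma C1_fun_has_derivative_Dy:
  assumes "C1_fun (\<lambda>(x, y). F x y)"
  shows "(F x has_derivative Dy F x y) (at y)"
  using assms partial_has_derivative_Dy(1) unfolding C1_fun_def by blast

lemma C1_fun_tendsto:
  assumes "C1_fun (\<lambda>(x, y). F x y)" and "(a \<longlongrightarrow> a0) L" and "(b \<longlongrightarrow> b0) L"
  shows "((\<lambda>n. F (a n) (b n)) \<longlongrightarrow> F a0 b0) L"
proof -
  have "isCont (\<lambda>(x, y). F x y) (a0, b0)"
    using assms(1) has_derivative_continuous unfolding C1_fun_def by blast
  from isCont_tendsto_compose[OF this tendsto_Pair[OF assms(2,3)]] show ?thesis by simp
qed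

lemma C1_fun_Dy_tendsto:
  assumes "C1_fun (\<lambda>(x, y). F x y)"
    and "(a \<longlongrightarrow> a0) L" and "(b \<longlongrightarrow> b0) L" and "(v \<longlongrightarrow> v0) L"
  shows "((\<lambda>n. Dy F (a n) (b n) (v n)) \<longlongrightarrow> Dy F a0 b0 v0) L"
proof -
  obtain F' where der: "\<And>z. ((\<lambda>(x, y). F x y) has_derivative blinfun_apply (F' z)) (at z)"
    and "continuous_on UNIV F'"
    using assms(1) unfolding C1_fun_def by blast
  then have "isCont F' (a0, b0)" by (simp add: continuous_on_eq_continuous_at)
  from isCont_tendsto_compose[OF this tendsto_Pair[OF assms(2,3)]]
  have "((\<lambda>n. F' (a n, b n)) \<longlongrightarrow> F' (a0, b0)) L" .
  moreover have "((\<lambda>n. (0, v n)) \<longlongrightarrow> (0, v0)) L" by (intro tendsto_intros assms(4))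
  ultimately show ?thesis
    unfolding partial_has_derivative_Dy(2)[OF der] by (rule blinfun.tendsto)
qed

lemma C1_fun_Dy_uniform_bound:
  assumes "C1_fun (\<lambda>(x, y). F x y)" and "xs \<longlonglongrightarrow> x0"
  obtains M where "0 \<le> M" "\<And>n v. \<bar>Dy F (xs n) y v\<bar> \<le> M * norm v"
proof -
  obtain F' where der: "\<And>z. ((\<lambda>(x, y). F x y) has_derivative blinfun_apply (F' z)) (at z)"
    and "continuous_on UNIV F'"
    using assms(1) unfolding C1_fun_def by blast
  then have "isCont F' (x0, y)" by (simp add: continuous_on_eq_continuous_at)
  from isCont_tendsto_compose[OF this tendsto_Pair[OF assms(2) tendsto_const]]
  have "Bseq (\<lambda>n. F' (xs n, y))" by (intro convergent_imp_Bseq convergentI)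
  then obtain M where M: "0 < M" "\<And>n. norm (F' (xs n, y)) \<le> M" by (rule BseqE) blast
  have bound: "\<bar>Dy F (xs n) y v\<bar> \<le> M * norm v" for n v
  proof -
    have "\<bar>Dy F (xs n) y v\<bar> \<le> norm (F' (xs n, y)) * norm (0::'a, v)"
      unfolding partial_has_derivative_Dy(2)[OF der] using norm_blinfun by (metis real_norm_def)
    also have "\<dots> \<le> M * norm v" using M(2)[of n] by (simp add: norm_Pair mult_right_mono)
    finally show ?thesis .
  qed
  show thesis by (rule that[OF less_imp_le[OF M(1)] bound])
qed

section \<open>Multipliers of the lower-level problem at a fixed upper-level point\<close>

lemma affine_fun_convex_on:
  assumes "affine_fun f"
  shows "convex_on UNIV f"
proof (rule convex_onI)
  obtain L c where L: "linear L" "\<And>y. f y = L y + c" using assms unfolding affine_fun_def by blast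
  fix t :: real and y z
  have "L ((1 - t) *\<^sub>R y + t *\<^sub>R z) = (1 - t) * L y + t * L z"
    using L(1) by (simp add: linear_add linear_scale)
  then show "f ((1 - t) *\<^sub>R y + t *\<^sub>R z) \<le> (1 - t) * f y + t * f z"
    unfolding L(2) by (simp add: algebra_simps)
qed simp

lemma affine_fun_eq_Dy:
  fixes F :: "'a \<Rightarrow> 'b::euclidean_space \<Rightarrow> real"
  assumes "affine_fun (F x)"
  shows "F x (z + v) = F x z + Dy F x y v"
proof -
  obtain L c where L: "linear L" "\<And>y. F x y = L y + c" using assms unfolding affine_fun_def by blast
  have "F x = (\<lambda>y. L y + c)" using L(2) by auto
  moreover have "bounded_linear L" using L(1) by (simp add: linear_conv_bounded_linear)
  ultimately have "(F x has_derivative L) (at y)"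
    by (auto intro!: derivative_eq_intros bounded_linear.has_derivative[where g = "\<lambda>y. y"])
  then have "Dy F x y = L" unfolding Dy_def by (rule frechet_derivative_at[symmetric])
  with L show ?thesis by (simp add: linear_add)
qed

lemma ystar_feas: "y \<in> ystar g k h x \<Longrightarrow> y \<in> feas k h x"
  by (simp add: ystar_def)

lemma ystar_feasible: "y \<in> ystar g k h x \<Longrightarrow> i \<in> {1..k} \<Longrightarrow> h i x y \<le> 0"
  by (simp add: ystar_def feas_def)

lemma ystar_minimal: "y \<in> ystar g k h x \<Longrightarrow> y' \<in> feas k h x \<Longrightarrow> g x y \<le> g x y'"
  by (simp add: ystar_def)

lemma ystar_eq_value:
  assumes "y1 \<in> ystar g k h x" "y2 \<in> ystar g k h x"
  shows "g x y1 = g x y2"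
  using ystar_minimal[OF assms(1) ystar_feas[OF assms(2)]] ystar_minimal[OF assms(2) ystar_feas[OF assms(1)]]
  by (rule antisym)

lemma ystar_unique_if_strongly_convex:
  fixes g :: "'a \<Rightarrow> 'b::real_inner \<Rightarrow> real"
  assumes "0 < \<mu>" and sc: "strongly_convex_on UNIV \<mu> (g x)"
    and h_convex: "\<And>i. i \<in> {1..k} \<Longrightarrow> convex_on UNIV (h i x)"
    and y1: "y1 \<in> ystar g k h x" and y2: "y2 \<in> ystar g k h x"
  shows "y1 = y2"
proof -
  define m where "m = (1 - 1/2) *\<^sub>R y1 + (1/2::real) *\<^sub>R y2"
  have "h i x m \<le> 0" if "i \<in> {1..k}" for i
  proof -
    have "h i x m \<le> (1 - 1/2) * h i x y1 + (1/2) * h i x y2"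
      unfolding m_def by (rule convex_onD[OF h_convex[OF that]]) auto
    then have "2 * h i x m \<le> h i x y1 + h i x y2" by simp
    with ystar_feasible[OF y1 that] ystar_feasible[OF y2 that] show ?thesis by linarith
  qed
  then have "m \<in> feas k h x" by (simp add: feas_def)
  then have opt: "g x y1 \<le> g x m" "g x y1 = g x y2"
    using ystar_minimal[OF y1] ystar_eq_value[OF y1 y2] by auto
  have "g x m - \<mu> / 2 * (norm m)\<^sup>2
      \<le> (1 - 1/2) * (g x y1 - \<mu> / 2 * (norm y1)\<^sup>2) + (1/2) * (g x y2 - \<mu> / 2 * (norm y2)\<^sup>2)"
    unfolding m_def by (rule convex_onD[OF sc[unfolded strongly_convex_on_def]]) auto
  moreover have "(norm m)\<^sup>2 = (1/2) * (norm y1)\<^sup>2 + (1/2) * (norm y2)\<^sup>2 - (1/4) * (norm (y1 - y2))\<^sup>2"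
    unfolding m_def
    by (simp add: power2_norm_eq_inner inner_add inner_diff inner_commute algebra_simps)
  ultimately have "\<mu> / 8 * (norm (y1 - y2))\<^sup>2 \<le> 0"
    using opt by (simp add: algebra_simps)
  with \<open>0 < \<mu>\<close> show ?thesis by (simp add: mult_le_0_iff)
qed

lemma LICQ_atD:
  assumes licq: "LICQ_at k h x y"
    and inactive: "\<And>j. j \<in> {1..k} \<Longrightarrow> h j x y \<noteq> 0 \<Longrightarrow> c j = 0"
    and comb: "\<And>v. (\<Sum>j\<in>{1..k}. c j * Dy (h j) x y v) = 0"
    and i: "i \<in> {1..k}"
  shows "c i = 0"
proof (cases "h i x y = 0")
  case True
  define A where "A = {j\<in>{1..k}. h j x y = 0}"
  have "(\<Sum>j\<in>A. c j * Dy (h j) x y v) = 0" for v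
  proof -
    have "(\<Sum>j\<in>A. c j * Dy (h j) x y v) = (\<Sum>j\<in>{1..k}. c j * Dy (h j) x y v)"
      by (rule sum.mono_neutral_left) (auto simp: A_def inactive)
    with comb show ?thesis by simp
  qed
  with licq True i show ?thesis unfolding LICQ_at_def A_def by blast
qed (use inactive i in simp)

lemma KKT_mult_unique:
  assumes licq: "LICQ_at k h x y"
    and l1: "is_KKT_mult g k h x y l1" and l2: "is_KKT_mult g k h x y l2" and i: "i \<in> {1..k}"
  shows "l1 i = l2 i"
proof -
  have "l1 i - l2 i = 0"
  proof (rule LICQ_atD[OF licq _ _ i])
    show "l1 j - l2 j = 0" if "j \<in> {1..k}" "h j x y \<noteq> 0" for j
    proof -
      have "l1 j * h j x y = 0" "l2 j * h j x y = 0"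
        using l1 l2 that(1) unfolding is_KKT_mult_def by blast+
      with that(2) show ?thesis by simp
    qed
    show "(\<Sum>j\<in>{1..k}. (l1 j - l2 j) * Dy (h j) x y v) = 0" for v
    proof -
      have "Dy g x y v + (\<Sum>j\<in>{1..k}. l1 j * Dy (h j) x y v) = 0"
        "Dy g x y v + (\<Sum>j\<in>{1..k}. l2 j * Dy (h j) x y v) = 0"
        using l1 l2 unfolding is_KKT_mult_def by blast+
      then show ?thesis unfolding left_diff_distrib sum_subtractf by linarith
    qed
  qed
  then show ?thesis by simp
qed

lemma is_KKT_mult_ystar_if_affine:
  fixes g :: "'a \<Rightarrow> 'b::euclidean_space \<Rightarrow> real"
  assumes g_aff: "affine_fun (g x)" and h_aff: "\<And>i. i \<in> {1..k} \<Longrightarrow> affine_fun (h i x)"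
    and y1: "y1 \<in> ystar g k h x" and y2: "y2 \<in> ystar g k h x"
    and KKT: "is_KKT_mult g k h x y1 lam"
  shows "is_KKT_mult g k h x y2 lam"
proof -
  have Dg: "Dy g x y2 v = Dy g x y1 v" for v
    using affine_fun_eq_Dy[where F=g, OF g_aff, of 0 v y1] affine_fun_eq_Dy[where F=g, OF g_aff, of 0 v y2]
    by simp
  have Dh: "Dy (h i) x y2 v = Dy (h i) x y1 v" if "i \<in> {1..k}" for i v
    using affine_fun_eq_Dy[where F="h i", OF h_aff[OF that], of 0 v y1]
      affine_fun_eq_Dy[where F="h i", OF h_aff[OF that], of 0 v y2]
    by simp
  have nonneg: "\<forall>i\<in>{1..k}. 0 \<le> lam i"
    and stat: "\<And>v. Dy g x y1 v + (\<Sum>i\<in>{1..k}. lam i * Dy (h i) x y1 v) = 0"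
    and slack: "\<forall>i\<in>{1..k}. lam i * h i x y1 = 0"
    using KKT unfolding is_KKT_mult_def by auto
  have "g x y2 = g x y1" using ystar_eq_value[OF y2 y1] .
  then have "Dy g x y1 (y2 - y1) = 0"
    using affine_fun_eq_Dy[where F=g, OF g_aff, of y1 "y2 - y1" y1] by simp
  moreover have "(\<Sum>i\<in>{1..k}. lam i * Dy (h i) x y1 (y2 - y1)) = (\<Sum>i\<in>{1..k}. lam i * h i x y2)"
  proof (rule sum.cong)
    fix i assume i: "i \<in> {1..k}"
    then show "lam i * Dy (h i) x y1 (y2 - y1) = lam i * h i x y2"
      using affine_fun_eq_Dy[where F="h i", OF h_aff[OF i], of y1 "y2 - y1" y1] slack
      by (simp add: algebra_simps)
  qed simp
  ultimately have "(\<Sum>i\<in>{1..k}. lam i * h i x y2) = 0"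
    using stat[of "y2 - y1"] by simp
  then have "(\<Sum>i\<in>{1..k}. - (lam i * h i x y2)) = 0"
    by (simp add: sum_negf)
  moreover have "0 \<le> - (lam i * h i x y2)" if "i \<in> {1..k}" for i
    using nonneg ystar_feasible[OF y2 that] that by (simp add: mult_nonneg_nonpos)
  ultimately have "\<forall>i\<in>{1..k}. lam i * h i x y2 = 0"
    using sum_nonneg_eq_0_iff[of "{1..k}" "\<lambda>i. - (lam i * h i x y2)"] by simp
  with nonneg stat show ?thesis unfolding is_KKT_mult_def by (simp add: Dg Dh)
qed

text \<open>The normalisation \<open>t + \<Sum>l = 1\<close> keeps Fritz John multipliers in a compact set.\<close>

definition is_Fritz_John_mult :: "('a \<Rightarrow> 'b::real_normed_vector \<Rightarrow> real) \<Rightarrow> nat \<Rightarrow> (nat \<Rightarrow> 'a \<Rightarrow> 'b \<Rightarrow> real)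
    \<Rightarrow> 'a \<Rightarrow> 'b \<Rightarrow> real \<Rightarrow> (nat \<Rightarrow> real) \<Rightarrow> bool" where
  "is_Fritz_John_mult g k h x y t l \<longleftrightarrow>
     0 \<le> t \<and> (\<forall>i\<in>{1..k}. 0 \<le> l i) \<and> t + (\<Sum>i\<in>{1..k}. l i) = 1 \<and>
     (\<forall>v. t * Dy g x y v + (\<Sum>i\<in>{1..k}. l i * Dy (h i) x y v) = 0) \<and>
     (\<forall>i\<in>{1..k}. l i * h i x y = 0)"

lemma is_Fritz_John_mult_bounds:
  assumes FJ: "is_Fritz_John_mult g k h x y t l"
  shows "\<bar>t\<bar> \<le> 1" and "i \<in> {1..k} \<Longrightarrow> \<bar>l i\<bar> \<le> 1"
proof -
  have nonneg: "0 \<le> t" "\<And>j. j \<in> {1..k} \<Longrightarrow> 0 \<le> l j" and sum: "t + (\<Sum>j\<in>{1..k}. l j) = 1"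
    using FJ unfolding is_Fritz_John_mult_def by auto
  have "0 \<le> (\<Sum>j\<in>{1..k}. l j)" using nonneg(2) by (intro sum_nonneg)
  then show "\<bar>t\<bar> \<le> 1" using nonneg(1) sum by simp
  assume i: "i \<in> {1..k}"
  have "l i \<le> (\<Sum>j\<in>{1..k}. l j)" using i nonneg(2) by (intro member_le_sum) auto
  with \<open>0 \<le> (\<Sum>j\<in>{1..k}. l j)\<close> show "\<bar>l i\<bar> \<le> 1" using nonneg(1) nonneg(2)[OF i] sum by simp
qed

lemma is_Fritz_John_mult_convergent_subseq:
  fixes ts :: "nat \<Rightarrow> real" and ls :: "nat \<Rightarrow> nat \<Rightarrow> real"
  assumes FJ: "\<And>n. is_Fritz_John_mult g k h (xs n) (ys n) (ts n) (ls n)"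
  obtains r t l where "strict_mono r" "(\<lambda>n. ts (r n)) \<longlonglongrightarrow> t"
    "\<And>i. i \<in> {1..k} \<Longrightarrow> (\<lambda>n. ls (r n) i) \<longlonglongrightarrow> l i"
proof -
  define a where "a n i = (if i = 0 then ts n else ls n i)" for n i
  have "bounded (range (\<lambda>n. a n i))" if "i \<in> insert 0 {1..k}" for i
  proof -
    have "norm (a n i) \<le> 1" for n
      using is_Fritz_John_mult_bounds[OF FJ[of n]] that by (cases "i = 0") (auto simp: a_def)
    then show ?thesis unfolding bounded_iff by blast
  qed
  then obtain r c where r: "strict_mono r" "\<forall>i\<in>insert 0 {1..k}. (\<lambda>n. a (r n) i) \<longlonglongrightarrow> c i"
    using bounded_family_convergent_subseq[of "insert 0 {1..k}" a] by blast
  then show thesis by (intro that[of r "c 0" c]) (auto simp: a_def)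
qed

lemma Fritz_John_mult_objective_pos:
  assumes licq: "LICQ_at k h x y" and FJ: "is_Fritz_John_mult g k h x y t l"
  shows "0 < t"
proof (rule ccontr)
  assume "\<not> 0 < t"
  with FJ have "t = 0" unfolding is_Fritz_John_mult_def by simp
  have "l i = 0" if "i \<in> {1..k}" for i
  proof (rule LICQ_atD[OF licq _ _ that])
    show "l j = 0" if "j \<in> {1..k}" "h j x y \<noteq> 0" for j
      using FJ that unfolding is_Fritz_John_mult_def by auto
    show "(\<Sum>j\<in>{1..k}. l j * Dy (h j) x y v) = 0" for v
      using FJ \<open>t = 0\<close> unfolding is_Fritz_John_mult_def by auto
  qed
  then have "(\<Sum>i\<in>{1..k}. l i) = 0" by simp
  with FJ \<open>t = 0\<close> show False unfolding is_Fritz_John_mult_def by simp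
qed

lemma is_KKT_mult_of_Fritz_John:
  assumes licq: "LICQ_at k h x y" and FJ: "is_Fritz_John_mult g k h x y t l"
  shows "is_KKT_mult g k h x y (\<lambda>i. l i / t)"
proof -
  have t: "0 < t" by (rule Fritz_John_mult_objective_pos[OF licq FJ])
  have "Dy g x y v + (\<Sum>i\<in>{1..k}. l i / t * Dy (h i) x y v)
      = (t * Dy g x y v + (\<Sum>i\<in>{1..k}. l i * Dy (h i) x y v)) / t" for v
    using t by (simp add: sum_divide_distrib add_divide_distrib)
  with FJ t show ?thesis unfolding is_KKT_mult_def is_Fritz_John_mult_def by auto
qed

lemma is_Fritz_John_mult_of_KKT:
  assumes KKT: "is_KKT_mult g k h x y lam"
  defines "T \<equiv> 1 + (\<Sum>i\<in>{1..k}. lam i)"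
  shows "is_Fritz_John_mult g k h x y (1 / T) (\<lambda>i. lam i / T)"
proof -
  have "0 \<le> (\<Sum>i\<in>{1..k}. lam i)"
    using KKT unfolding is_KKT_mult_def by (intro sum_nonneg) blast
  then have T: "0 < T" unfolding T_def by linarith
  have "1 / T + (\<Sum>i\<in>{1..k}. lam i / T) = 1"
    using T unfolding T_def by (simp add: sum_divide_distrib[symmetric] add_divide_distrib[symmetric])
  moreover have "1 / T * Dy g x y v + (\<Sum>i\<in>{1..k}. lam i / T * Dy (h i) x y v)
      = (Dy g x y v + (\<Sum>i\<in>{1..k}. lam i * Dy (h i) x y v)) / T" for v
    by (simp add: sum_divide_distrib add_divide_distrib)
  ultimately show ?thesis
    using KKT T unfolding is_Fritz_John_mult_def is_KKT_mult_def by auto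
qed

lemma ystar_no_strict_descent_direction:
  fixes g :: "'a \<Rightarrow> 'b::real_normed_vector \<Rightarrow> real"
  assumes y: "y \<in> ystar g k h x"
    and g': "(g x has_derivative Dy g x y) (at y)"
    and h': "\<And>i. i \<in> {1..k} \<Longrightarrow> (h i x has_derivative Dy (h i) x y) (at y)"
    and descent: "Dy g x y d < 0"
    and active: "\<And>i. i \<in> {1..k} \<Longrightarrow> h i x y = 0 \<Longrightarrow> Dy (h i) x y d < 0"
  shows False
proof -
  have "\<forall>\<^sub>F t in at_right 0. h i x (y + t *\<^sub>R d) < 0" if i: "i \<in> {1..k}" for i
  proof (cases "h i x y = 0")
    case True
    with eventually_less_along_descent_direction[OF h'[OF i] active[OF i True]] show ?thesis
      by simp
  next
    case False
    with ystar_feasible[OF y i] have "h i x y < 0" by simp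
    with has_derivative_continuous[OF h'[OF i]] show ?thesis by (rule eventually_neg_along_ray)
  qed
  then have "\<forall>\<^sub>F t in at_right 0. \<forall>i\<in>{1..k}. h i x (y + t *\<^sub>R d) < 0"
    by (simp add: eventually_ball_finite_distrib)
  moreover have "\<forall>\<^sub>F t in at_right 0. g x (y + t *\<^sub>R d) < g x y"
    by (rule eventually_less_along_descent_direction[OF g' descent])
  ultimately obtain t where "\<forall>i\<in>{1..k}. h i x (y + t *\<^sub>R d) < 0" "g x (y + t *\<^sub>R d) < g x y"
    using eventually_happens'[OF trivial_limit_at_right_real] eventually_conj by blast
  then have "y + t *\<^sub>R d \<in> feas k h x" "g x (y + t *\<^sub>R d) < g x y"
    by (auto simp: feas_def)
  with ystar_minimal[OF y] show False by fastforce
qed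

lemma is_Fritz_John_mult_exists:
  fixes g :: "'a \<Rightarrow> 'b::euclidean_space \<Rightarrow> real"
  assumes y: "y \<in> ystar g k h x"
    and g': "(g x has_derivative Dy g x y) (at y)"
    and h': "\<And>i. i \<in> {1..k} \<Longrightarrow> (h i x has_derivative Dy (h i) x y) (at y)"
  shows "\<exists>t l. is_Fritz_John_mult g k h x y t l"
proof -
  define A where "A = {i\<in>{1..k}. h i x y = 0}"
  \<comment> \<open>index \<open>0\<close> stands for the objective, the constraints keep their indices \<open>1..k\<close>\<close>
  define L where "L i = (if i = 0 then Dy g x y else Dy (h i) x y)" for i
  have A: "finite A" "0 \<notin> A" "A \<subseteq> {1..k}" unfolding A_def by auto
  show ?thesis
  proof (rule gordan_alternative[of "insert 0 A" L])
    show "finite (insert 0 A)" using A by simp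
    show "linear (L i)" if "i \<in> insert 0 A" for i
      using that A has_derivative_linear[OF g'] has_derivative_linear[OF h'] by (auto simp: L_def)
  next
    fix w assume w: "\<And>i. i \<in> insert 0 A \<Longrightarrow> 0 \<le> w i" "sum w (insert 0 A) = 1"
      "\<And>v. (\<Sum>i\<in>insert 0 A. w i * L i v) = 0"
    define l where "l i = (if i \<in> A then w i else 0)" for i
    have restrict: "(\<Sum>i\<in>{1..k}. l i * f i) = (\<Sum>i\<in>A. w i * f i)" for f :: "nat \<Rightarrow> real"
    proof -
      have "(\<Sum>i\<in>{1..k}. l i * f i) = (\<Sum>i\<in>{1..k} \<inter> A. w i * f i)"
        unfolding sum.inter_restrict[OF finite_atLeastAtMost] by (rule sum.cong) (auto simp: l_def)
      also have "{1..k} \<inter> A = A" using A by blast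
      finally show ?thesis .
    qed
    have "is_Fritz_John_mult g k h x y (w 0) l"
      unfolding is_Fritz_John_mult_def
    proof (intro conjI ballI allI)
      show "0 \<le> w 0" "0 \<le> l i" for i using w(1) by (auto simp: l_def)
      show "w 0 + (\<Sum>i\<in>{1..k}. l i) = 1" using restrict[of "\<lambda>_. 1"] w(2) A by simp
      show "l i * h i x y = 0" for i by (simp add: l_def A_def)
      fix v
      have "(\<Sum>i\<in>A. w i * L i v) = (\<Sum>i\<in>A. w i * Dy (h i) x y v)"
        using A by (intro sum.cong) (auto simp: L_def)
      then show "w 0 * Dy g x y v + (\<Sum>i\<in>{1..k}. l i * Dy (h i) x y v) = 0"
        using w(3)[of v] A restrict[of "\<lambda>i. Dy (h i) x y v"] by (simp add: L_def)
    qed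
    then show ?thesis by blast
  next
    fix d assume d: "\<And>i. i \<in> insert 0 A \<Longrightarrow> L i d < 0"
    have descent: "Dy g x y d < 0" using d[of 0] by (simp add: L_def)
    have active: "Dy (h i) x y d < 0" if "i \<in> {1..k}" "h i x y = 0" for i
      using d[of i] that by (simp add: L_def A_def)
    show ?thesis using ystar_no_strict_descent_direction[OF y g' h' descent active] ..
  qed
qed

lemma KKT_mult_exists:
  fixes g :: "'a \<Rightarrow> 'b::euclidean_space \<Rightarrow> real"
  assumes "y \<in> ystar g k h x" and "LICQ_at k h x y"
    and "(g x has_derivative Dy g x y) (at y)"
    and "\<And>i. i \<in> {1..k} \<Longrightarrow> (h i x has_derivative Dy (h i) x y) (at y)"
  shows "\<exists>lam. is_KKT_mult g k h x y lam"
  using is_Fritz_John_mult_exists[OF assms(1,3,4)] is_KKT_mult_of_Fritz_John[OF assms(2)] by blast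

section \<open>Continuity of the multipliers\<close>

locale lower_level_problem =
  fixes g :: "'a::euclidean_space \<Rightarrow> 'b::euclidean_space \<Rightarrow> real"
    and h :: "nat \<Rightarrow> 'a \<Rightarrow> 'b \<Rightarrow> real" and k :: nat and X :: "'a set"
  assumes g_C1: "C1_fun (\<lambda>(x, y). g x y)"
    and h_C1: "\<And>i. i \<in> {1..k} \<Longrightarrow> C1_fun (\<lambda>(x, y). h i x y)"
    and compact_X: "compact X"
    and slater: "\<And>x. x \<in> X \<Longrightarrow> \<exists>y. \<forall>i\<in>{1..k}. h i x y < 0"
    and LICQ: "\<And>x y. x \<in> X \<Longrightarrow> y \<in> ystar g k h x \<Longrightarrow> LICQ_at k h x y"
    and SC_or_LIN:
      "(\<exists>\<mu>>0. \<forall>x\<in>X. strongly_convex_on UNIV \<mu> (g x) \<and> (\<forall>i\<in>{1..k}. convex_on UNIV (h i x)))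
       \<or> (\<forall>x\<in>X. affine_fun (g x) \<and> (\<forall>i\<in>{1..k}. affine_fun (h i x)) \<and> compact (feas k h x))"
begin

lemma SC_or_LIN_cases:
  obtains (SC) \<mu> where "0 < \<mu>" "\<And>x. x \<in> X \<Longrightarrow> strongly_convex_on UNIV \<mu> (g x)"
      "\<And>x i. x \<in> X \<Longrightarrow> i \<in> {1..k} \<Longrightarrow> convex_on UNIV (h i x)"
  | (LIN) "\<And>x. x \<in> X \<Longrightarrow> affine_fun (g x)"
      "\<And>x i. x \<in> X \<Longrightarrow> i \<in> {1..k} \<Longrightarrow> affine_fun (h i x)"
      "\<And>x. x \<in> X \<Longrightarrow> compact (feas k h x)"
  using SC_or_LIN by blast

lemma h_convex: "x \<in> X \<Longrightarrow> i \<in> {1..k} \<Longrightarrow> convex_on UNIV (h i x)"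
  by (cases rule: SC_or_LIN_cases) (auto intro: affine_fun_convex_on)

lemma g_has_derivative_Dy: "(g x has_derivative Dy g x y) (at y)"
  by (rule C1_fun_has_derivative_Dy[OF g_C1])

lemma h_has_derivative_Dy: "i \<in> {1..k} \<Longrightarrow> (h i x has_derivative Dy (h i) x y) (at y)"
  by (rule C1_fun_has_derivative_Dy[OF h_C1])

lemma continuous_on_g: "continuous_on S (g x)"
  by (intro continuous_at_imp_continuous_on ballI has_derivative_continuous[OF g_has_derivative_Dy])

lemma closed_feas: "closed (feas k h x)"
proof -
  have "feas k h x = (\<Inter>i\<in>{1..k}. {y. h i x y \<le> 0})" by (auto simp: feas_def)
  moreover have "closed {y. h i x y \<le> 0}" if "i \<in> {1..k}" for i
    using h_has_derivative_Dy[OF that]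
    by (intro closed_Collect_le continuous_on_const continuous_at_imp_continuous_on ballI
        has_derivative_continuous) blast
  ultimately show ?thesis by auto
qed

lemma ystar_nonempty:
  assumes "x \<in> X"
  shows "ystar g k h x \<noteq> {}"
proof -
  obtain y1 where "\<forall>i\<in>{1..k}. h i x y1 < 0" using slater[OF assms] by blast
  then have y1: "y1 \<in> feas k h x" by (auto simp: feas_def less_imp_le)
  show ?thesis
  proof (cases rule: SC_or_LIN_cases)
    case (SC \<mu>)
    note sc = SC(2)[OF assms]
    obtain M where M: "0 \<le> M" "\<And>v. \<bar>Dy g x y1 v\<bar> \<le> M * norm v"
      using bounded_linear.nonneg_bounded[OF has_derivative_bounded_linear[OF g_has_derivative_Dy]]
      by (metis mult.commute real_norm_def)
    define K where "K = feas k h x \<inter> cball y1 (2 * M / \<mu>)"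
    have "compact K" unfolding K_def by (intro closed_Int_compact closed_feas compact_cball)
    moreover have "y1 \<in> K" unfolding K_def using y1 M(1) SC(1) by simp
    then have "\<exists>y0\<in>K. \<forall>y\<in>K. g x y0 \<le> g x y"
      by (intro continuous_attains_inf[OF \<open>compact K\<close> _ continuous_on_g]) blast
    then obtain y0 where y0: "y0 \<in> K" "\<And>y. y \<in> K \<Longrightarrow> g x y0 \<le> g x y" by blast
    have "g x y0 \<le> g x y" if y: "y \<in> feas k h x" for y
    proof (rule ccontr)
      assume "\<not> g x y0 \<le> g x y"
      with y0(2)[OF \<open>y1 \<in> K\<close>] have "g x y \<le> g x y1" by simp
      with strongly_convex_on_sublevel_dist_le[OF sc SC(1) M(1) g_has_derivative_Dy M(2)]
      have "y \<in> K" using y unfolding K_def by (simp add: dist_norm norm_minus_commute[of y1 y])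
      with y0(2) \<open>\<not> g x y0 \<le> g x y\<close> show False by blast
    qed
    with y0(1) show ?thesis unfolding K_def ystar_def by blast
  next
    case LIN
    from LIN(3)[OF assms] have "\<exists>y0\<in>feas k h x. \<forall>y\<in>feas k h x. g x y0 \<le> g x y"
      using y1 by (intro continuous_attains_inf[OF _ _ continuous_on_g]) blast+
    then show ?thesis unfolding ystar_def by blast
  qed
qed

text \<open>Only meaningful on \<open>X\<close>, where all minimisers share a KKT multiplier; outside \<open>X\<close> the
  choice is arbitrary.\<close>

definition multiplier :: "'a \<Rightarrow> nat \<Rightarrow> real" where
  "multiplier x = (SOME lam. \<forall>y\<in>ystar g k h x. is_KKT_mult g k h x y lam)"

lemma multiplier_is_KKT_mult:
  assumes x: "x \<in> X" and y: "y \<in> ystar g k h x"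
  shows "is_KKT_mult g k h x y (multiplier x)"
proof -
  obtain y0 where y0: "y0 \<in> ystar g k h x" using ystar_nonempty[OF x] by blast
  obtain lam where lam: "is_KKT_mult g k h x y0 lam"
    using KKT_mult_exists[OF y0 LICQ[OF x y0] g_has_derivative_Dy h_has_derivative_Dy] by blast
  have "\<forall>y\<in>ystar g k h x. is_KKT_mult g k h x y lam"
  proof (cases rule: SC_or_LIN_cases)
    case (SC \<mu>)
    then have "y = y0" if "y \<in> ystar g k h x" for y
      using ystar_unique_if_strongly_convex[OF SC(1) SC(2)[OF x] SC(3)[OF x] that y0] by blast
    with lam show ?thesis by blast
  next
    case LIN
    show ?thesis
      using is_KKT_mult_ystar_if_affine[OF LIN(1)[OF x] LIN(2)[OF x] y0 _ lam] by blast
  qed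
  then have "\<forall>y\<in>ystar g k h x. is_KKT_mult g k h x y (multiplier x)"
    unfolding multiplier_def
    by (rule someI[where P = "\<lambda>lam. \<forall>y\<in>ystar g k h x. is_KKT_mult g k h x y lam"])
  with y show ?thesis by blast
qed

lemma eventually_feas:
  assumes "xs \<longlonglongrightarrow> x0" and "\<forall>i\<in>{1..k}. h i x0 y < 0"
  shows "\<forall>\<^sub>F n in sequentially. y \<in> feas k h (xs n)"
proof -
  have "\<forall>\<^sub>F n in sequentially. h i (xs n) y < 0" if i: "i \<in> {1..k}" for i
    using order_tendstoD(2)[OF C1_fun_tendsto[OF h_C1[OF i] assms(1) tendsto_const]] assms(2) i
    by blast
  then have "\<forall>\<^sub>F n in sequentially. \<forall>i\<in>{1..k}. h i (xs n) y < 0"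
    by (simp add: eventually_ball_finite_distrib)
  then show ?thesis by (rule eventually_mono) (auto simp: feas_def less_imp_le)
qed

lemma feas_limit:
  assumes "xs \<longlonglongrightarrow> x0" "ys \<longlonglongrightarrow> y0" "\<And>n. ys n \<in> feas k h (xs n)"
  shows "y0 \<in> feas k h x0"
proof -
  have "h i x0 y0 \<le> 0" if i: "i \<in> {1..k}" for i
  proof (rule tendsto_upperbound[OF C1_fun_tendsto[OF h_C1[OF i] assms(1,2)]])
    show "\<forall>\<^sub>F n in sequentially. h i (xs n) (ys n) \<le> 0" using assms(3) i by (simp add: feas_def)
  qed simp
  then show ?thesis by (simp add: feas_def)
qed

lemma ystar_limit:
  assumes xs: "\<And>n. xs n \<in> X" "xs \<longlonglongrightarrow> x0" "x0 \<in> X"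
    and ys: "\<And>n. ys n \<in> ystar g k h (xs n)" "ys \<longlonglongrightarrow> y0"
  shows "y0 \<in> ystar g k h x0"
proof -
  have y0: "y0 \<in> feas k h x0" by (rule feas_limit[OF xs(2) ys(2) ystar_feas[OF ys(1)]])
  obtain y1 where y1: "\<forall>i\<in>{1..k}. h i x0 y1 < 0" using slater[OF xs(3)] by blast
  have "g x0 y0 \<le> g x0 y" if y: "y \<in> feas k h x0" for y
  proof -
    define w where "w t = (1 - t) *\<^sub>R y + t *\<^sub>R y1" for t :: real
    have le: "g x0 y0 \<le> g x0 (w t)" if t: "0 < t" "t < 1" for t
    proof -
      have "h i x0 (w t) < 0" if i: "i \<in> {1..k}" for i
      proof -
        have "h i x0 (w t) \<le> (1 - t) * h i x0 y + t * h i x0 y1"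
          unfolding w_def using t by (intro convex_onD[OF h_convex[OF xs(3) i]]) auto
        moreover have "(1 - t) * h i x0 y \<le> 0" using y i t by (simp add: feas_def mult_nonneg_nonpos)
        moreover have "t * h i x0 y1 < 0" using y1 i t by (simp add: mult_pos_neg)
        ultimately show ?thesis by linarith
      qed
      then have "\<forall>\<^sub>F n in sequentially. w t \<in> feas k h (xs n)"
        by (intro eventually_feas[OF xs(2)]) blast
      then have "\<forall>\<^sub>F n in sequentially. g (xs n) (ys n) \<le> g (xs n) (w t)"
        by (rule eventually_mono) (rule ystar_minimal[OF ys(1)])
      then show ?thesis
        by (rule tendsto_le[OF trivial_limit_sequentially C1_fun_tendsto[OF g_C1 xs(2) tendsto_const]
              C1_fun_tendsto[OF g_C1 xs(2) ys(2)]])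
    qed
    have "\<forall>\<^sub>F t in at_right 0. t \<in> {0<..<1::real}" by (rule eventually_at_right_real) simp
    then have "\<forall>\<^sub>F t in at_right 0. g x0 y0 \<le> g x0 (w t)" by (rule eventually_mono) (use le in auto)
    moreover have "(w \<longlongrightarrow> (1 - 0) *\<^sub>R y + 0 *\<^sub>R y1) (at_right 0)"
      unfolding w_def by (intro tendsto_intros)
    then have "((\<lambda>t. g x0 (w t)) \<longlongrightarrow> g x0 y) (at_right 0)"
      using C1_fun_tendsto[OF g_C1 tendsto_const] by simp
    ultimately show ?thesis by (intro tendsto_lowerbound) auto
  qed
  with y0 show ?thesis by (simp add: ystar_def)
qed

lemma ystar_eventually_bounded_if_strongly_convex:
  assumes "0 < \<mu>" and sc: "\<And>x. x \<in> X \<Longrightarrow> strongly_convex_on UNIV \<mu> (g x)"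
    and xs: "\<And>n. xs n \<in> X" "xs \<longlonglongrightarrow> x0" "x0 \<in> X" and ys: "\<And>n. ys n \<in> ystar g k h (xs n)"
  shows "\<exists>B. \<forall>\<^sub>F n in sequentially. norm (ys n) \<le> B"
proof -
  obtain y1 where "\<forall>i\<in>{1..k}. h i x0 y1 < 0" using slater[OF xs(3)] by blast
  then have feasible: "\<forall>\<^sub>F n in sequentially. y1 \<in> feas k h (xs n)" by (rule eventually_feas[OF xs(2)])
  obtain M where M: "0 \<le> M" "\<And>n v. \<bar>Dy g (xs n) y1 v\<bar> \<le> M * norm v"
    using C1_fun_Dy_uniform_bound[OF g_C1 xs(2), where y = y1] by blast
  have "\<forall>\<^sub>F n in sequentially. norm (ys n) \<le> norm y1 + 2 * M / \<mu>"
  proof (rule eventually_mono[OF feasible])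
    fix n assume "y1 \<in> feas k h (xs n)"
    then have "g (xs n) (ys n) \<le> g (xs n) y1" by (rule ystar_minimal[OF ys])
    then have "norm (ys n - y1) \<le> 2 * M / \<mu>"
      by (rule strongly_convex_on_sublevel_dist_le[OF sc[OF xs(1)] \<open>0 < \<mu>\<close> M(1) g_has_derivative_Dy M(2)])
    then show "norm (ys n) \<le> norm y1 + 2 * M / \<mu>" using norm_triangle_sub[of "ys n" y1] by linarith
  qed
  then show ?thesis by blast
qed

lemma Dy_h_scale: "i \<in> {1..k} \<Longrightarrow> Dy (h i) x y (c *\<^sub>R v) = c * Dy (h i) x y v"
  using linear_scale[OF has_derivative_linear[OF h_has_derivative_Dy]] by simp

lemma escaping_direction_recedes_if_affine:
  assumes aff: "\<And>x i. x \<in> X \<Longrightarrow> i \<in> {1..k} \<Longrightarrow> affine_fun (h i x)"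
    and xs: "\<And>n. xs n \<in> X" "xs \<longlonglongrightarrow> x0" and ys: "\<And>n. ys n \<in> feas k h (xs n)"
    and escape: "filterlim (\<lambda>n. norm (ys n)) at_top sequentially"
    and dir: "(\<lambda>n. ys n /\<^sub>R norm (ys n)) \<longlonglongrightarrow> d" and i: "i \<in> {1..k}"
  shows "Dy (h i) x0 0 d \<le> 0"
proof -
  have "\<forall>\<^sub>F n in sequentially. 0 < norm (ys n)"
    using escape unfolding filterlim_at_top_dense by blast
  then have "\<forall>\<^sub>F n in sequentially.
      h i (xs n) 0 * inverse (norm (ys n)) + Dy (h i) (xs n) 0 (ys n /\<^sub>R norm (ys n)) \<le> 0"
  proof (rule eventually_mono)
    fix n assume "0 < norm (ys n)"
    have "h i (xs n) (ys n) = h i (xs n) 0 + Dy (h i) (xs n) 0 (ys n)"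
      using affine_fun_eq_Dy[where F = "h i", OF aff[OF xs(1)[of n] i], of 0 "ys n" 0] by simp
    moreover have "h i (xs n) (ys n) \<le> 0" using ys[of n] i by (simp add: feas_def)
    ultimately have "inverse (norm (ys n)) * (h i (xs n) 0 + Dy (h i) (xs n) 0 (ys n)) \<le> 0"
      using \<open>0 < norm (ys n)\<close> by (simp add: mult_nonneg_nonpos)
    then show "h i (xs n) 0 * inverse (norm (ys n)) + Dy (h i) (xs n) 0 (ys n /\<^sub>R norm (ys n)) \<le> 0"
      by (simp add: Dy_h_scale[OF i] algebra_simps)
  qed
  moreover have "(\<lambda>n. h i (xs n) 0 * inverse (norm (ys n)) + Dy (h i) (xs n) 0 (ys n /\<^sub>R norm (ys n)))
      \<longlonglongrightarrow> h i x0 0 * 0 + Dy (h i) x0 0 d"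
    by (intro tendsto_intros C1_fun_tendsto[OF h_C1[OF i] xs(2) tendsto_const]
        C1_fun_Dy_tendsto[OF h_C1[OF i] xs(2) tendsto_const dir] tendsto_inverse_0_at_top escape)
  ultimately show ?thesis using tendsto_upperbound by fastforce
qed

lemma feas_no_escaping_direction_if_affine:
  assumes aff: "\<And>x i. x \<in> X \<Longrightarrow> i \<in> {1..k} \<Longrightarrow> affine_fun (h i x)"
    and "compact (feas k h x0)"
    and xs: "\<And>n. xs n \<in> X" "xs \<longlonglongrightarrow> x0" "x0 \<in> X" and ys: "\<And>n. ys n \<in> feas k h (xs n)"
    and escape: "filterlim (\<lambda>n. norm (ys n)) at_top sequentially"
    and dir: "(\<lambda>n. ys n /\<^sub>R norm (ys n)) \<longlonglongrightarrow> d" and "norm d = 1"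
  shows False
proof -
  obtain y1 where "\<forall>i\<in>{1..k}. h i x0 y1 < 0" using slater[OF xs(3)] by blast
  then have y1: "y1 \<in> feas k h x0" by (auto simp: feas_def less_imp_le)
  have "y1 + t *\<^sub>R d \<in> feas k h x0" if "0 \<le> t" for t
  proof -
    have "h i x0 (y1 + t *\<^sub>R d) \<le> 0" if i: "i \<in> {1..k}" for i
    proof -
      have "h i x0 (y1 + t *\<^sub>R d) = h i x0 y1 + t * Dy (h i) x0 0 d"
        using affine_fun_eq_Dy[where F = "h i", OF aff[OF xs(3) i], of y1 "t *\<^sub>R d" 0] Dy_h_scale[OF i]
        by simp
      moreover have "h i x0 y1 \<le> 0" using y1 i by (simp add: feas_def)
      moreover have "Dy (h i) x0 0 d \<le> 0"
        by (rule escaping_direction_recedes_if_affine[OF aff xs(1,2) ys escape dir i])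
      ultimately show ?thesis using mult_nonneg_nonpos[OF \<open>0 \<le> t\<close>] by fastforce
    qed
    then show ?thesis by (simp add: feas_def)
  qed
  moreover have "bounded (feas k h x0)" using \<open>compact (feas k h x0)\<close> by (rule compact_imp_bounded)
  moreover have "d \<noteq> 0" using \<open>norm d = 1\<close> by auto
  ultimately show False using bounded_contains_no_ray by blast
qed

lemma ystar_convergent_subseq:
  assumes xs: "\<And>n. xs n \<in> X" "xs \<longlonglongrightarrow> x0" "x0 \<in> X" and ys: "\<And>n. ys n \<in> ystar g k h (xs n)"
  obtains r y0 where "strict_mono r" "(\<lambda>n. ys (r n)) \<longlonglongrightarrow> y0"
proof (rule convergent_subseq_or_escaping_direction[of ys])
  fix r y0 assume "strict_mono r" "(\<lambda>n. ys (r n)) \<longlonglongrightarrow> y0"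
  then show thesis by (rule that)
next
  fix r d assume r: "strict_mono r" and "norm d = 1"
    and escape: "filterlim (\<lambda>n. norm (ys (r n))) at_top sequentially"
    and dir: "(\<lambda>n. ys (r n) /\<^sub>R norm (ys (r n))) \<longlonglongrightarrow> d"
  have xr: "(\<lambda>n. xs (r n)) \<longlonglongrightarrow> x0" using LIMSEQ_subseq_LIMSEQ[OF xs(2) r] by (simp add: o_def)
  show thesis
  proof (cases rule: SC_or_LIN_cases)
    case (SC \<mu>)
    then obtain B where "\<forall>\<^sub>F n in sequentially. norm (ys (r n)) \<le> B"
      using ystar_eventually_bounded_if_strongly_convex[OF SC(1,2) xs(1) xr xs(3) ys] by blast
    moreover have "\<forall>\<^sub>F n in sequentially. B < norm (ys (r n))"
      using escape unfolding filterlim_at_top_dense by blast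
    ultimately have "\<forall>\<^sub>F n in sequentially. False"
      by (rule eventually_elim2) simp
    then show thesis by simp
  next
    case LIN
    from feas_no_escaping_direction_if_affine[OF LIN(2) LIN(3)[OF xs(3)] xs(1) xr xs(3)
        ystar_feas[OF ys] escape dir \<open>norm d = 1\<close>]
    show thesis ..
  qed
qed

lemma ystar_convergent_selection:
  assumes xs: "\<And>n. xs n \<in> X" "xs \<longlonglongrightarrow> x0" "x0 \<in> X"
  obtains r ys y0 where "strict_mono r" "\<And>n. ys n \<in> ystar g k h (xs (r n))" "ys \<longlonglongrightarrow> y0"
    "y0 \<in> ystar g k h x0"
proof -
  have "\<forall>n. \<exists>y. y \<in> ystar g k h (xs n)" using ystar_nonempty[OF xs(1)] by blast
  then obtain ys where ys: "\<And>n. ys n \<in> ystar g k h (xs n)" by metis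
  obtain r y0 where r: "strict_mono r" "(\<lambda>n. ys (r n)) \<longlonglongrightarrow> y0"
    using ystar_convergent_subseq[OF xs ys] by blast
  have lim: "(\<lambda>n. xs (r n)) \<longlonglongrightarrow> x0" using LIMSEQ_subseq_LIMSEQ[OF xs(2) r(1)] by (simp add: o_def)
  have "y0 \<in> ystar g k h x0"
    by (rule ystar_limit[where xs = "\<lambda>n. xs (r n)" and ys = "\<lambda>n. ys (r n)", OF xs(1) lim xs(3) ys r(2)])
  then show thesis by (rule that[OF r(1) ys r(2)])
qed

lemma is_Fritz_John_mult_limit:
  assumes xs: "xs \<longlonglongrightarrow> x0" and ys: "ys \<longlonglongrightarrow> y0"
    and ts: "ts \<longlonglongrightarrow> t" and ls: "\<And>i. i \<in> {1..k} \<Longrightarrow> (\<lambda>n. ls n i) \<longlonglongrightarrow> l i"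
    and FJ: "\<And>n. is_Fritz_John_mult g k h (xs n) (ys n) (ts n) (ls n)"
  shows "is_Fritz_John_mult g k h x0 y0 t l"
proof -
  note FJ' = FJ[unfolded is_Fritz_John_mult_def]
  have "0 \<le> t" using FJ' by (intro tendsto_lowerbound[OF ts] always_eventually) simp_all
  moreover have "0 \<le> l i" if "i \<in> {1..k}" for i
    using FJ' that by (intro tendsto_lowerbound[OF ls] always_eventually) simp_all
  moreover have "t + (\<Sum>i\<in>{1..k}. l i) = 1"
  proof -
    have "(\<lambda>n. ts n + (\<Sum>i\<in>{1..k}. ls n i)) \<longlonglongrightarrow> t + (\<Sum>i\<in>{1..k}. l i)"
      by (intro tendsto_add ts tendsto_sum ls)
    moreover have "(\<lambda>n. ts n + (\<Sum>i\<in>{1..k}. ls n i)) = (\<lambda>n. 1)" using FJ' by simp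
    ultimately show ?thesis by (simp add: LIMSEQ_const_iff)
  qed
  moreover have "t * Dy g x0 y0 v + (\<Sum>i\<in>{1..k}. l i * Dy (h i) x0 y0 v) = 0" for v
  proof -
    have "(\<lambda>n. \<Sum>i\<in>{1..k}. ls n i * Dy (h i) (xs n) (ys n) v)
        \<longlonglongrightarrow> (\<Sum>i\<in>{1..k}. l i * Dy (h i) x0 y0 v)"
    proof (rule tendsto_sum)
      fix i assume i: "i \<in> {1..k}"
      show "(\<lambda>n. ls n i * Dy (h i) (xs n) (ys n) v) \<longlonglongrightarrow> l i * Dy (h i) x0 y0 v"
        by (intro tendsto_mult ls[OF i] C1_fun_Dy_tendsto[OF h_C1[OF i] xs ys tendsto_const])
    qed
    then have "(\<lambda>n. ts n * Dy g (xs n) (ys n) v + (\<Sum>i\<in>{1..k}. ls n i * Dy (h i) (xs n) (ys n) v))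
        \<longlonglongrightarrow> t * Dy g x0 y0 v + (\<Sum>i\<in>{1..k}. l i * Dy (h i) x0 y0 v)"
      by (intro tendsto_add tendsto_mult ts C1_fun_Dy_tendsto[OF g_C1 xs ys tendsto_const])
    moreover have "(\<lambda>n. ts n * Dy g (xs n) (ys n) v + (\<Sum>i\<in>{1..k}. ls n i * Dy (h i) (xs n) (ys n) v))
        = (\<lambda>n. 0)"
      using FJ' by simp
    ultimately show ?thesis by (simp add: LIMSEQ_const_iff)
  qed
  moreover have "l i * h i x0 y0 = 0" if i: "i \<in> {1..k}" for i
  proof -
    have "(\<lambda>n. ls n i * h i (xs n) (ys n)) \<longlonglongrightarrow> l i * h i x0 y0"
      by (intro tendsto_mult ls[OF i] C1_fun_tendsto[OF h_C1[OF i] xs ys])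
    moreover have "(\<lambda>n. ls n i * h i (xs n) (ys n)) = (\<lambda>n. 0)" using FJ' i by (simp add: fun_eq_iff)
    ultimately show ?thesis by (simp add: LIMSEQ_const_iff)
  qed
  ultimately show ?thesis unfolding is_Fritz_John_mult_def by blast
qed

lemma multiplier_subseq_tendsto:
  assumes xs: "\<And>n. xs n \<in> X" "xs \<longlonglongrightarrow> x0" "x0 \<in> X"
  obtains r where "strict_mono r" "\<And>i. i \<in> {1..k} \<Longrightarrow> (\<lambda>n. multiplier (xs (r n)) i) \<longlonglongrightarrow> multiplier x0 i"
proof -
  obtain r1 y' y0 where r1: "strict_mono r1"
    and y': "\<And>n. y' n \<in> ystar g k h (xs (r1 n))" "y' \<longlonglongrightarrow> y0"
    and y0: "y0 \<in> ystar g k h x0"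
    by (rule ystar_convergent_selection[OF xs]) blast
  define x' where "x' = (\<lambda>n. xs (r1 n))"
  have x': "\<And>n. x' n \<in> X" "x' \<longlonglongrightarrow> x0"
    using xs(1) LIMSEQ_subseq_LIMSEQ[OF xs(2) r1] by (auto simp: x'_def o_def)
  have y'_ystar: "y' n \<in> ystar g k h (x' n)" for n using y'(1) by (simp add: x'_def)
  define T where "T n = 1 + (\<Sum>i\<in>{1..k}. multiplier (x' n) i)" for n
  define ts ls where "ts n = 1 / T n" and "ls n i = multiplier (x' n) i / T n" for n i
  have FJ: "is_Fritz_John_mult g k h (x' n) (y' n) (ts n) (ls n)" for n
    unfolding ts_def ls_def T_def
    by (rule is_Fritz_John_mult_of_KKT[OF multiplier_is_KKT_mult[OF x'(1) y'_ystar]])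
  obtain r2 t l where r2: "strict_mono r2" and ts_lim: "(\<lambda>n. ts (r2 n)) \<longlonglongrightarrow> t"
    and ls_lim: "\<And>i. i \<in> {1..k} \<Longrightarrow> (\<lambda>n. ls (r2 n) i) \<longlonglongrightarrow> l i"
    by (rule is_Fritz_John_mult_convergent_subseq[where ts = ts and ls = ls, OF FJ]) blast
  have "is_Fritz_John_mult g k h x0 y0 t l"
    using LIMSEQ_subseq_LIMSEQ[OF x'(2) r2] LIMSEQ_subseq_LIMSEQ[OF y'(2) r2]
    by (intro is_Fritz_John_mult_limit[OF _ _ ts_lim ls_lim FJ]) (simp_all add: o_def)
  then have "0 < t" and KKT: "is_KKT_mult g k h x0 y0 (\<lambda>i. l i / t)"
    using Fritz_John_mult_objective_pos[OF LICQ[OF xs(3) y0]]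
      is_KKT_mult_of_Fritz_John[OF LICQ[OF xs(3) y0]]
    by blast+
  have "(\<lambda>n. multiplier (x' (r2 n)) i) \<longlonglongrightarrow> multiplier x0 i" if i: "i \<in> {1..k}" for i
  proof -
    have T_pos: "T n > 0" for n
    proof -
      have "0 \<le> (\<Sum>i\<in>{1..k}. multiplier (x' n) i)"
        using multiplier_is_KKT_mult[OF x'(1) y'_ystar] unfolding is_KKT_mult_def by (intro sum_nonneg) blast
      then show ?thesis unfolding T_def by linarith
    qed
    have "multiplier (x' n) i = ls n i / ts n" for n using T_pos[of n] by (simp add: ls_def ts_def)
    moreover have "(\<lambda>n. ls (r2 n) i / ts (r2 n)) \<longlonglongrightarrow> l i / t"
      using \<open>0 < t\<close> by (intro tendsto_divide ls_lim[OF i] ts_lim) simp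
    moreover have "multiplier x0 i = l i / t"
      by (rule KKT_mult_unique[OF LICQ[OF xs(3) y0] multiplier_is_KKT_mult[OF xs(3) y0] KKT i])
    ultimately show ?thesis by simp
  qed
  moreover have "strict_mono (r1 \<circ> r2)" using r1 r2 by (rule strict_mono_o)
  ultimately show thesis by (intro that[of "r1 \<circ> r2"]) (simp_all add: x'_def)
qed

lemma continuous_on_multiplier:
  assumes i: "i \<in> {1..k}"
  shows "continuous_on X (\<lambda>x. multiplier x i)"
proof (rule continuous_on_sequentiallyI)
  fix xs x0 assume xs: "\<forall>n. xs n \<in> X" "x0 \<in> X" "xs \<longlonglongrightarrow> x0"
  show "(\<lambda>n. multiplier (xs n) i) \<longlonglongrightarrow> multiplier x0 i"
  proof (rule LIMSEQ_if_subseqs_have_LIMSEQ_subseq)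
    fix r :: "nat \<Rightarrow> nat" assume "strict_mono r"
    then have lim: "(\<lambda>n. xs (r n)) \<longlonglongrightarrow> x0" using LIMSEQ_subseq_LIMSEQ[OF xs(3)] by (simp add: o_def)
    have Xr: "\<And>n. xs (r n) \<in> X" using xs(1) by blast
    obtain r' where "strict_mono r'"
      "\<And>i. i \<in> {1..k} \<Longrightarrow> (\<lambda>n. multiplier (xs (r (r' n))) i) \<longlonglongrightarrow> multiplier x0 i"
      by (rule multiplier_subseq_tendsto[OF Xr lim xs(2)]) blast
    with i show "\<exists>r'. strict_mono r' \<and> (\<lambda>n. multiplier (xs (r (r' n))) i) \<longlonglongrightarrow> multiplier x0 i" by blast
  qed
qed

lemma multiplier_bounded: "\<exists>C. \<forall>i\<in>{1..k}. \<forall>x\<in>X. \<bar>multiplier x i\<bar> \<le> C"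
proof -
  have "compact ((\<lambda>x. \<Sum>i\<in>{1..k}. \<bar>multiplier x i\<bar>) ` X)"
    by (intro compact_continuous_image compact_X continuous_intros continuous_on_multiplier)
  then have "bounded ((\<lambda>x. \<Sum>i\<in>{1..k}. \<bar>multiplier x i\<bar>) ` X)" by (rule compact_imp_bounded)
  then obtain C where "\<forall>z\<in>(\<lambda>x. \<Sum>i\<in>{1..k}. \<bar>multiplier x i\<bar>) ` X. norm z \<le> C"
    unfolding bounded_iff by blast
  then have C: "\<And>x. x \<in> X \<Longrightarrow> \<bar>\<Sum>i\<in>{1..k}. \<bar>multiplier x i\<bar>\<bar> \<le> C" by simp
  have "\<bar>multiplier x i\<bar> \<le> C" if "i \<in> {1..k}" "x \<in> X" for i x
  proof -
    have "\<bar>multiplier x i\<bar> \<le> (\<Sum>i\<in>{1..k}. \<bar>multiplier x i\<bar>)" using that by (intro member_le_sum) auto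
    also have "\<dots> \<le> C" using C[OF that(2)] by simp
    finally show ?thesis .
  qed
  then show ?thesis by blast
qed

end

theorem lemma8:
  fixes f g :: "'a::euclidean_space \<Rightarrow> 'b::euclidean_space \<Rightarrow> real"
    and h :: "nat \<Rightarrow> 'a \<Rightarrow> 'b \<Rightarrow> real"
    and k :: nat and X :: "'a set"
  assumes A1: "C1_fun (\<lambda>(x, y). f x y)" "C2_fun (\<lambda>(x, y). g x y)"
              "\<forall>i\<in>{1..k}. C2_fun (\<lambda>(x, y). h i x y)"
    and A2: "convex X" "compact X" "\<forall>x\<in>X. \<exists>y. \<forall>i\<in>{1..k}. h i x y < 0"
    and A3: "\<forall>x\<in>X. \<forall>y\<in>ystar g k h x. LICQ_at k h x y"
    and SC_or_LIN:
      "(\<exists>\<mu>>0. \<forall>x\<in>X. strongly_convex_on UNIV \<mu> (g x) \<and> (\<forall>i\<in>{1..k}. convex_on UNIV (h i x)))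
       \<or> (\<forall>x\<in>X. affine_fun (g x) \<and> (\<forall>i\<in>{1..k}. affine_fun (h i x)) \<and> compact (feas k h x))"
  shows "\<exists>lam :: 'a \<Rightarrow> nat \<Rightarrow> real.
           (\<forall>x\<in>X. \<forall>y\<in>ystar g k h x. is_KKT_mult g k h x y (lam x)) \<and>
           (\<forall>i\<in>{1..k}. continuous_on X (\<lambda>x. lam x i)) \<and>
           (\<exists>C. \<forall>i\<in>{1..k}. \<forall>x\<in>X. \<bar>lam x i\<bar> \<le> C)"
proof -
  interpret lower_level_problem g h k X
    using A1(2,3) A2(2,3) A3 SC_or_LIN by unfold_locales (auto intro: C2_fun_imp_C1_fun)
  show ?thesis
    by (intro exI[of _ multiplier] conjI ballI multiplier_is_KKT_mult continuous_on_multiplier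
        multiplier_bounded)
qed

end
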